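(* Let $T$ be a permutation tableau, and let $P$ be an alternating path of $T$ with label sequence $p_1p_2\cdots p_r$. Here $p_1$ is the label of the starting dot and $p_r$ is the label of the final black dot. Then $p_1,p_2,\ldots,p_r$ occur in the permutation $\xi(T)$ in this left-to-right order, i.e. $p_1p_2\cdots p_r$ is a subsequence of $\xi(T)$.
   Context: Permutation tableaux. Draw a Ferrers diagram in English convention: rows are left-justified, row lengths weakly decrease from top to bottom, and every column is nonempty. Rows of length zero are allowed. A permutation tableau $T$ is a filling of the cells of such a diagram with 0's and 1's satisfying two conditions: (i) every column contains at least one 1; (ii) no cell containing 0 has both a 1 above it in its column and a 1 to its left in its row. Its length $n$ is the number of rows plus the number of columns. Labels. The southeast boundary path of $n$ unit south/west steps, from the top-right corner to the bottom-left corner, has its steps labeled $1,\ldots,n$ in order. Each row gets the label of its south step, and each column the label of its west step. $(i,j)$ denotes the cell in row $i$ and column $j$. Zeros, ones and rows. A 1 is topmost if there is no 1 above it in its column. A 0 is restricted if there is a 1 above it in its column. A rightmost restricted 0 is a restricted 0 with no restricted 0 to its right in its row. A row is unrestricted if it contains no restricted 0; empty rows are unrestricted. Dots. Black dots are placed on the topmost 1's (one per column), each labeled by its column label. White dots are placed on the rightmost restricted 0's (one per restricted row), each labeled by its row label. Alternating paths. An alternating path is a sequence of dots, identified with the sequence of their labels, built as follows. - From a white dot in cell $(i,j)$, the next dot is the black dot of column $j$. - From a black dot in cell $(i,j)$: if row $i$ is unrestricted, the path ends; otherwise the next dot is the white dot of row $i$. The bijection $\xi$. Start with the labels of the unrestricted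 rows in increasing order. Then process the column labels in decreasing order. For a column $j$: 1. If its black dot is in cell $(i,j)$, insert $j$ immediately to the left of $i$. 2. If column $j$ has white dots in rows $i_1<\cdots<i_k$, insert $i_1\cdots i_k$, in increasing order, immediately to the left of $j$. The result is the permutation $\xi(T)$ of $[n]$. *)

theory Defs
  imports Main "HOL-Library.Sublist"
begin

text \<open>
A permutation tableau of length n is encoded by its southeast boundary path:
R is the set of labels of the south steps (= row labels); the remaining labels
in {1..n} are the west steps (= column labels).  With the labelling of the
boundary path, row i and column j intersect in a cell of the Ferrers diagram
iff i < j.  Rows are ordered top to bottom by increasing label, columns
right to left by increasing label.  The filling is T :: nat => nat => bool
(True = 1, False = 0), only meaningful on cells.
\<close>

definition cols :: "nat \<Rightarrow> nat set \<Rightarrow> nat set" where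
  "cols n R = {1..n} - R"

definition is_cell :: "nat \<Rightarrow> nat set \<Rightarrow> nat \<Rightarrow> nat \<Rightarrow> bool" where
  "is_cell n R i j \<longleftrightarrow> i \<in> R \<and> j \<in> cols n R \<and> i < j"

definition perm_tableau :: "nat \<Rightarrow> nat set \<Rightarrow> (nat \<Rightarrow> nat \<Rightarrow> bool) \<Rightarrow> bool" where
  "perm_tableau n R T \<longleftrightarrow>
     R \<subseteq> {1..n} \<and>
     \<comment> \<open>every column of the Ferrers diagram is nonempty\<close>
     (\<forall>j \<in> cols n R. \<exists>i. is_cell n R i j) \<and>
     \<comment> \<open>(i) every column contains a 1\<close>
     (\<forall>j \<in> cols n R. \<exists>i. is_cell n R i j \<and> T i j) \<and>
     \<comment> \<open>(ii) no 0 with a 1 above it and a 1 to its left\<close>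
     (\<forall>i j. is_cell n R i j \<and> \<not> T i j \<longrightarrow>
        \<not> ((\<exists>i'. is_cell n R i' j \<and> i' < i \<and> T i' j) \<and>
           (\<exists>j'. is_cell n R i j' \<and> j < j' \<and> T i j')))"

definition topmost_one :: "nat \<Rightarrow> nat set \<Rightarrow> (nat \<Rightarrow> nat \<Rightarrow> bool) \<Rightarrow> nat \<Rightarrow> nat \<Rightarrow> bool" where
  "topmost_one n R T i j \<longleftrightarrow> is_cell n R i j \<and> T i j \<and>
     \<not> (\<exists>i'. is_cell n R i' j \<and> i' < i \<and> T i' j)"

definition restricted_zero :: "nat \<Rightarrow> nat set \<Rightarrow> (nat \<Rightarrow> nat \<Rightarrow> bool) \<Rightarrow> nat \<Rightarrow> nat \<Rightarrow> bool" where
  "restricted_zero n R T i j \<longleftrightarrow> is_cell n R i j \<and> \<not> T i j \<and>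
     (\<exists>i'. is_cell n R i' j \<and> i' < i \<and> T i' j)"

text \<open>To the right in a row = smaller column label.\<close>
definition rightmost_restricted_zero :: "nat \<Rightarrow> nat set \<Rightarrow> (nat \<Rightarrow> nat \<Rightarrow> bool) \<Rightarrow> nat \<Rightarrow> nat \<Rightarrow> bool" where
  "rightmost_restricted_zero n R T i j \<longleftrightarrow> restricted_zero n R T i j \<and>
     \<not> (\<exists>j'. restricted_zero n R T i j' \<and> j' < j)"

definition restricted_row :: "nat \<Rightarrow> nat set \<Rightarrow> (nat \<Rightarrow> nat \<Rightarrow> bool) \<Rightarrow> nat \<Rightarrow> bool" where
  "restricted_row n R T i \<longleftrightarrow> i \<in> R \<and> (\<exists>j. restricted_zero n R T i j)"

definition unrestricted_row :: "nat \<Rightarrow> nat set \<Rightarrow> (nat \<Rightarrow> nat \<Rightarrow> bool) \<Rightarrow> nat \<Rightarrow> bool" where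
  "unrestricted_row n R T i \<longleftrightarrow> i \<in> R \<and> \<not> (\<exists>j. restricted_zero n R T i j)"

definition black_row :: "nat \<Rightarrow> nat set \<Rightarrow> (nat \<Rightarrow> nat \<Rightarrow> bool) \<Rightarrow> nat \<Rightarrow> nat" where
  "black_row n R T j = (THE i. topmost_one n R T i j)"

definition white_col :: "nat \<Rightarrow> nat set \<Rightarrow> (nat \<Rightarrow> nat \<Rightarrow> bool) \<Rightarrow> nat \<Rightarrow> nat" where
  "white_col n R T i = (THE j. rightmost_restricted_zero n R T i j)"

datatype dot = Black nat | White nat

fun dot_label :: "dot \<Rightarrow> nat" where
  "dot_label (Black j) = j"
| "dot_label (White i) = i"

fun is_dot :: "nat \<Rightarrow> nat set \<Rightarrow> (nat \<Rightarrow> nat \<Rightarrow> bool) \<Rightarrow> dot \<Rightarrow> bool" where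
  "is_dot n R T (Black j) \<longleftrightarrow> (\<exists>i. topmost_one n R T i j)"
| "is_dot n R T (White i) \<longleftrightarrow> (\<exists>j. rightmost_restricted_zero n R T i j)"

fun next_dot :: "nat \<Rightarrow> nat set \<Rightarrow> (nat \<Rightarrow> nat \<Rightarrow> bool) \<Rightarrow> dot \<Rightarrow> dot option" where
  "next_dot n R T (White i) = Some (Black (white_col n R T i))"
| "next_dot n R T (Black j) =
     (let i = black_row n R T j in
      if unrestricted_row n R T i then None else Some (White i))"

definition alt_path :: "nat \<Rightarrow> nat set \<Rightarrow> (nat \<Rightarrow> nat \<Rightarrow> bool) \<Rightarrow> dot list \<Rightarrow> bool" where
  "alt_path n R T ds \<longleftrightarrow> ds \<noteq> [] \<and> is_dot n R T (hd ds) \<and>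
     (\<forall>k. Suc k < length ds \<longrightarrow> next_dot n R T (ds ! k) = Some (ds ! Suc k)) \<and>
     next_dot n R T (last ds) = None"

definition ins_before :: "'a list \<Rightarrow> 'a \<Rightarrow> 'a list \<Rightarrow> 'a list" where
  "ins_before xs y w = takeWhile (\<lambda>z. z \<noteq> y) w @ xs @ dropWhile (\<lambda>z. z \<noteq> y) w"

definition xi_step :: "nat \<Rightarrow> nat set \<Rightarrow> (nat \<Rightarrow> nat \<Rightarrow> bool) \<Rightarrow> nat list \<Rightarrow> nat \<Rightarrow> nat list" where
  "xi_step n R T w j =
     (let w1 = ins_before [j] (black_row n R T j) w
      in ins_before (sorted_list_of_set {i. rightmost_restricted_zero n R T i j}) j w1)"

definition xi :: "nat \<Rightarrow> nat set \<Rightarrow> (nat \<Rightarrow> nat \<Rightarrow> bool) \<Rightarrow> nat list" where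
  "xi n R T = foldl (xi_step n R T)
     (sorted_list_of_set {i. unrestricted_row n R T i})
     (rev (sorted_list_of_set (cols n R)))"

end

theory Submission
  imports Defs
begin

(* The permutation xi(T) is a distinct list, and in a distinct list a sequence
   occurs as a subsequence as soon as each pair of consecutive entries does
   (lemma subseq_if_successive_pairs).  So it suffices to show, for a dot d and
   its successor d' on an alternating path, that the label of d precedes the
   label of d' in xi(T).  Both cases are read off from the single step of the
   construction that processes a column j:
   - white dot in row i, cell (i,j), followed by the black dot of column j:
     the step for j inserts i immediately to the left of j;
   - black dot in cell (i,j), followed by the white dot of row i: that white
     dot lies in a column j' > j (condition (ii) of a permutation tableau), so
     i is already present when column j is processed, and j is inserted
     immediately to the left of i.
   Later steps only insert entries, so these relative orders survive. *)


subsection \<open>Insertion into lists\<close>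

lemma set_ins_before [simp]: "set (ins_before xs y w) = set w \<union> set xs"
proof -
  have "set w = set (takeWhile (\<lambda>z. z \<noteq> y) w) \<union> set (dropWhile (\<lambda>z. z \<noteq> y) w)"
    by (metis set_append takeWhile_dropWhile_id)
  then show ?thesis by (auto simp: ins_before_def)
qed

lemma subseq_ins_before: "subseq w (ins_before xs y w)"
proof -
  have "subseq (takeWhile (\<lambda>z. z \<noteq> y) w @ dropWhile (\<lambda>z. z \<noteq> y) w)
                (takeWhile (\<lambda>z. z \<noteq> y) w @ xs @ dropWhile (\<lambda>z. z \<noteq> y) w)"
    by (intro list_emb_append_mono) auto
  then show ?thesis by (simp add: ins_before_def)
qed

lemma distinct_ins_before:
  assumes "distinct w" "distinct xs" "set xs \<inter> set w = {}"
  shows "distinct (ins_before xs y w)"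
proof -
  let ?t = "takeWhile (\<lambda>z. z \<noteq> y) w" and ?d = "dropWhile (\<lambda>z. z \<noteq> y) w"
  have "distinct (?t @ ?d)" using assms(1) by simp
  then have "distinct ?t" "distinct ?d" "set ?t \<inter> set ?d = {}" by (simp_all only: distinct_append)
  moreover have "set w = set ?t \<union> set ?d" by (metis set_append takeWhile_dropWhile_id)
  ultimately show ?thesis using assms(2,3) by (auto simp: ins_before_def)
qed

lemma inserted_before_target:
  assumes "a \<in> set xs" "y \<in> set w"
  shows "subseq [a, y] (ins_before xs y w)"
proof -
  have "dropWhile (\<lambda>z. z \<noteq> y) w = y # tl (dropWhile (\<lambda>z. z \<noteq> y) w)"
    using assms(2) by (induction w) auto
  moreover have "subseq ([a] @ [y]) (xs @ y # tl (dropWhile (\<lambda>z. z \<noteq> y) w))"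
    using assms(1) by (intro list_emb_append_mono) (auto simp: subseq_singleton_left)
  ultimately show ?thesis
    unfolding ins_before_def by (metis append_Cons append_Nil subseq_drop_many)
qed

lemma subseq_skip_prefix:
  "b \<notin> set us \<Longrightarrow> subseq (b # xs) (us @ vs) \<Longrightarrow> subseq (b # xs) vs"
  by (induction us) auto

lemma subseq_if_successive_pairs:
  assumes "distinct ys" "set xs \<subseteq> set ys"
    and "successively (\<lambda>a b. subseq [a, b] ys) xs"
  shows "subseq xs ys"
  using assms(2,3)
proof (induction xs rule: induct_list012)
  case (3 a b rest)
  have "subseq [a, b] ys" and "successively (\<lambda>a b. subseq [a, b] ys) (b # rest)"
    using "3.prems"(2) by simp_all
  moreover have "set (b # rest) \<subseteq> set ys" using "3.prems"(1) by simp
  ultimately have tail: "subseq (b # rest) ys" using "3.IH"(2) by blast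
  from \<open>subseq [a, b] ys\<close> obtain us vs where ys: "ys = us @ a # vs" and "subseq [b] vs"
    by (blast dest: list_emb_ConsD)
  then have "b \<in> set vs" by (simp add: subseq_singleton_left)
  then have "b \<notin> set (us @ [a])" using assms(1) ys by auto
  moreover have "subseq (b # rest) ((us @ [a]) @ vs)" using tail unfolding ys by simp
  ultimately have "subseq (b # rest) vs" by (rule subseq_skip_prefix)
  then show ?case unfolding ys by (simp add: subseq_drop_many)
qed (auto simp: subseq_singleton_left)


subsection \<open>Basic facts about the tableau\<close>

lemma cell_labels: "is_cell n R i j \<Longrightarrow> i \<in> R \<and> j \<in> cols n R \<and> j \<notin> R \<and> i < j"
  by (simp add: is_cell_def cols_def)

lemma rightmost_restricted_zero_cell: "rightmost_restricted_zero n R T i j \<Longrightarrow> is_cell n R i j"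
  by (simp add: rightmost_restricted_zero_def restricted_zero_def)

lemma rightmost_restricted_zero_unique:
  "rightmost_restricted_zero n R T i j1 \<Longrightarrow> rightmost_restricted_zero n R T i j2 \<Longrightarrow> j1 = j2"
  unfolding rightmost_restricted_zero_def by (meson linorder_neqE_nat)

lemma topmost_one_unique: "topmost_one n R T i1 j \<Longrightarrow> topmost_one n R T i2 j \<Longrightarrow> i1 = i2"
  unfolding topmost_one_def by (meson linorder_neqE_nat)

lemma white_col_eq: "rightmost_restricted_zero n R T i j \<Longrightarrow> white_col n R T i = j"
  unfolding white_col_def by (blast intro: rightmost_restricted_zero_unique)

lemma black_row_eq: "topmost_one n R T i j \<Longrightarrow> black_row n R T j = i"
  unfolding black_row_def by (blast intro: topmost_one_unique)

lemma column_has_black_dot: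
  assumes "perm_tableau n R T" "j \<in> cols n R"
  shows "\<exists>i. topmost_one n R T i j"
proof -
  from assms have ex: "\<exists>i. is_cell n R i j \<and> T i j" unfolding perm_tableau_def by blast
  let ?i = "LEAST i. is_cell n R i j \<and> T i j"
  have "is_cell n R ?i j \<and> T ?i j" using LeastI_ex[OF ex] .
  moreover have "\<not> (\<exists>i'. is_cell n R i' j \<and> i' < ?i \<and> T i' j)"
    using not_less_Least by blast
  ultimately show ?thesis unfolding topmost_one_def by blast
qed

lemma restricted_row_has_white_dot:
  assumes "i \<in> R" "\<not> unrestricted_row n R T i"
  shows "\<exists>j. rightmost_restricted_zero n R T i j"
proof -
  from assms have ex: "\<exists>j. restricted_zero n R T i j" by (simp add: unrestricted_row_def)
  let ?j = "LEAST j. restricted_zero n R T i j"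
  have "restricted_zero n R T i ?j" using LeastI_ex[OF ex] .
  moreover have "\<not> (\<exists>j'. restricted_zero n R T i j' \<and> j' < ?j)"
    using not_less_Least by blast
  ultimately show ?thesis unfolding rightmost_restricted_zero_def by blast
qed

text \<open>The key use of condition (ii): in a row containing both a black and a white
  dot, the white dot lies to the left of the black one, i.e. in a larger column.\<close>
lemma white_dot_left_of_black_dot:
  assumes "perm_tableau n R T" "topmost_one n R T i j" "rightmost_restricted_zero n R T i j'"
  shows "j < j'"
proof (rule ccontr)
  assume "\<not> j < j'"
  moreover have "j \<noteq> j'" using assms(2,3)
    by (auto simp: topmost_one_def rightmost_restricted_zero_def restricted_zero_def)
  ultimately have "j' < j" by simp
  with assms show False
    unfolding perm_tableau_def topmost_one_def rightmost_restricted_zero_def restricted_zero_def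
    by blast
qed

lemma next_of_white_dot:
  "rightmost_restricted_zero n R T i j \<Longrightarrow> next_dot n R T (White i) = Some (Black j)"
  by (simp add: white_col_eq)

lemma next_of_black_dot:
  assumes "topmost_one n R T i j" "next_dot n R T (Black j) = Some d'"
  shows "d' = White i \<and> (\<exists>j'. rightmost_restricted_zero n R T i j')"
proof -
  have "\<not> unrestricted_row n R T i" "d' = White i"
    using assms black_row_eq[OF assms(1)] by (auto simp: Let_def split: if_splits)
  moreover have "i \<in> R" using assms(1) by (simp add: topmost_one_def is_cell_def)
  ultimately show ?thesis using restricted_row_has_white_dot by blast
qed

lemma next_dot_is_dot:
  assumes "perm_tableau n R T" "is_dot n R T d" "next_dot n R T d = Some d'"
  shows "is_dot n R T d'"
proof (cases d)
  case (White i)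
  then obtain j where r: "rightmost_restricted_zero n R T i j" using assms(2) by auto
  then have "d' = Black j" using assms(3) White next_of_white_dot by simp
  moreover have "j \<in> cols n R" using rightmost_restricted_zero_cell[OF r] cell_labels by blast
  ultimately show ?thesis using column_has_black_dot[OF assms(1)] by simp
next
  case (Black j)
  then obtain i where "topmost_one n R T i j" using assms(2) by auto
  then have "d' = White i \<and> (\<exists>j'. rightmost_restricted_zero n R T i j')"
    using assms(3) Black next_of_black_dot by blast
  then show ?thesis by auto
qed

lemma alt_path_steps:
  "alt_path n R T ds \<Longrightarrow> successively (\<lambda>d d'. next_dot n R T d = Some d') ds"
  by (simp add: alt_path_def successively_conv_nth)

lemma dots_along_steps:
  assumes "perm_tableau n R T"
  shows "successively (\<lambda>d d'. next_dot n R T d = Some d') ds \<Longrightarrow> is_dot n R T (hd ds) \<Longrightarrow>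
    \<forall>d\<in>set ds. is_dot n R T d"
proof (induction ds rule: induct_list012)
  case (3 a b rest)
  have step: "next_dot n R T a = Some b"
    and steps: "successively (\<lambda>d d'. next_dot n R T d = Some d') (b # rest)"
    using "3.prems"(1) by simp_all
  have "is_dot n R T a" using "3.prems"(2) by simp
  then have "is_dot n R T b" using next_dot_is_dot[OF assms _ step] by simp
  then have "\<forall>d\<in>set (b # rest). is_dot n R T d" using "3.IH"(2)[OF steps] by simp
  with \<open>is_dot n R T a\<close> show ?case by simp
qed auto

subsection \<open>The steps of the construction of xi\<close>

definition white_rows :: "nat \<Rightarrow> nat set \<Rightarrow> (nat \<Rightarrow> nat \<Rightarrow> bool) \<Rightarrow> nat \<Rightarrow> nat set" where
  "white_rows n R T j = {i. rightmost_restricted_zero n R T i j}"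

abbreviation unrestricted_rows :: "nat \<Rightarrow> nat set \<Rightarrow> (nat \<Rightarrow> nat \<Rightarrow> bool) \<Rightarrow> nat set" where
  "unrestricted_rows n R T \<equiv> {i. unrestricted_row n R T i}"

lemma white_rows_in_rows: "white_rows n R T j \<subseteq> R - unrestricted_rows n R T"
  by (auto simp: white_rows_def unrestricted_row_def rightmost_restricted_zero_def
                 restricted_zero_def is_cell_def)

lemma finite_white_rows: "finite (white_rows n R T j)"
proof -
  have "white_rows n R T j \<subseteq> {..<j}"
    by (auto simp: white_rows_def is_cell_def dest: rightmost_restricted_zero_cell)
  then show ?thesis using finite_subset by blast
qed

lemma xi_step_eq: "xi_step n R T w j =
   ins_before (sorted_list_of_set (white_rows n R T j)) j (ins_before [j] (black_row n R T j) w)"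
  by (simp add: xi_step_def white_rows_def Let_def)

lemma set_xi_step: "set (xi_step n R T w j) = set w \<union> {j} \<union> white_rows n R T j"
  by (auto simp: xi_step_eq finite_white_rows)

lemma subseq_xi_step: "subseq w (xi_step n R T w j)"
  unfolding xi_step_eq by (rule subseq_order.order_trans[OF subseq_ins_before subseq_ins_before])

lemma white_row_before_column: "i \<in> white_rows n R T j \<Longrightarrow> subseq [i, j] (xi_step n R T w j)"
  unfolding xi_step_eq by (rule inserted_before_target) (auto simp: finite_white_rows)

lemma column_before_black_row:
  "black_row n R T j \<in> set w \<Longrightarrow> subseq [j, black_row n R T j] (xi_step n R T w j)"
  unfolding xi_step_eq
  by (rule subseq_order.order_trans[OF _ subseq_ins_before]) (auto intro: inserted_before_target)

lemma subseq_foldl_xi_step: "subseq w (foldl (xi_step n R T) w cs)"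
proof (induction cs arbitrary: w)
  case (Cons c cs)
  have "subseq (xi_step n R T w c) (foldl (xi_step n R T) (xi_step n R T w c) cs)" by (rule Cons.IH)
  then show ?case using subseq_order.order_trans[OF subseq_xi_step] by simp
qed simp

lemma set_foldl_xi_step:
  "set (foldl (xi_step n R T) w cs) = set w \<union> set cs \<union> \<Union>(white_rows n R T ` set cs)"
  by (induction cs arbitrary: w) (auto simp: set_xi_step)


subsection \<open>Distinctness of xi\<close>

text \<open>The entries present after processing a set D of columns.\<close>
definition processed :: "nat \<Rightarrow> nat set \<Rightarrow> (nat \<Rightarrow> nat \<Rightarrow> bool) \<Rightarrow> nat set \<Rightarrow> nat set" where
  "processed n R T D = unrestricted_rows n R T \<union> D \<union> \<Union>(white_rows n R T ` D)"

text \<open>The entries inserted for a new column are fresh: the column label is not a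
  row label, and its white rows are restricted rows whose white dot lies in no
  other column.\<close>
lemma new_column_fresh:
  assumes "j \<in> cols n R" "j \<notin> D"
  shows "j \<notin> processed n R T D"
  using assms white_rows_in_rows by (fastforce simp: processed_def cols_def unrestricted_row_def)

lemma new_white_rows_fresh:
  assumes "j \<in> cols n R" "j \<notin> D" "D \<subseteq> cols n R"
  shows "white_rows n R T j \<inter> insert j (processed n R T D) = {}"
proof -
  have "i \<notin> white_rows n R T c" if "i \<in> white_rows n R T j" "c \<in> D" for i c
    using that assms(2) rightmost_restricted_zero_unique by (fastforce simp: white_rows_def)
  moreover have "white_rows n R T j \<inter> (insert j D) = {}"
    using white_rows_in_rows assms by (fastforce simp: cols_def)
  ultimately show ?thesis using white_rows_in_rows by (fastforce simp: processed_def)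
qed

lemma distinct_xi_step:
  assumes "distinct w" "set w \<subseteq> processed n R T D"
    and "j \<in> cols n R" "j \<notin> D" "D \<subseteq> cols n R"
  shows "distinct (xi_step n R T w j)"
proof -
  have "j \<notin> set w" using assms new_column_fresh by blast
  then have inserted_column: "distinct (ins_before [j] (black_row n R T j) w)"
    using assms(1) by (intro distinct_ins_before) auto
  have "white_rows n R T j \<inter> set (ins_before [j] (black_row n R T j) w) = {}"
    using new_white_rows_fresh[OF assms(3-5)] assms(2) by auto
  then show ?thesis unfolding xi_step_eq
    by (intro distinct_ins_before[OF inserted_column]) (simp_all add: finite_white_rows)
qed

lemma distinct_foldl_xi_step:
  assumes "distinct w" "set w \<subseteq> processed n R T D" "D \<subseteq> cols n R"
    and "distinct cs" "set cs \<subseteq> cols n R" "set cs \<inter> D = {}"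
  shows "distinct (foldl (xi_step n R T) w cs)"
  using assms
proof (induction cs arbitrary: w D)
  case (Cons j cs)
  have "distinct (xi_step n R T w j)"
    using Cons.prems by (intro distinct_xi_step[where D = D]) auto
  moreover have "set (xi_step n R T w j) \<subseteq> processed n R T (insert j D)"
    using Cons.prems(2) by (auto simp: set_xi_step processed_def)
  ultimately show ?case using Cons.IH[of _ "insert j D"] Cons.prems by auto
qed simp

lemma finite_unrestricted_rows: "perm_tableau n R T \<Longrightarrow> finite (unrestricted_rows n R T)"
  by (rule finite_subset[of _ "{1..n}"]) (auto simp: perm_tableau_def unrestricted_row_def)

lemma finite_cols: "finite (cols n R)"
  by (simp add: cols_def)

lemma distinct_xi: "perm_tableau n R T \<Longrightarrow> distinct (xi n R T)"
  unfolding xi_def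
  by (rule distinct_foldl_xi_step[where D = "{}"])
     (auto simp: processed_def finite_unrestricted_rows finite_cols)

lemma set_xi: "perm_tableau n R T \<Longrightarrow>
  set (xi n R T) = unrestricted_rows n R T \<union> cols n R \<union> \<Union>(white_rows n R T ` cols n R)"
  unfolding xi_def by (simp add: set_foldl_xi_step finite_unrestricted_rows finite_cols)


subsection \<open>Dots of consecutive labels appear in order\<close>

text \<open>Columns are processed in decreasing order: when column j is processed, the
  current word w already contains the white rows of every larger column, and the
  result of the step survives as a subsequence of xi.\<close>
lemma xi_at_column:
  assumes "j \<in> cols n R"
  shows "\<exists>w. subseq (xi_step n R T w j) (xi n R T)
    \<and> (\<forall>c\<in>cols n R. j < c \<longrightarrow> white_rows n R T c \<subseteq> set w)"
proof -
  let ?cs = "rev (sorted_list_of_set (cols n R))"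
  let ?run = "foldl (xi_step n R T)"
  have "j \<in> set ?cs" using assms finite_cols by simp
  then obtain as bs where cs: "?cs = as @ j # bs" by (meson split_list)
  have "sorted_wrt (>) ?cs" by (simp add: sorted_wrt_rev)
  then have smaller: "\<forall>c\<in>set bs. c < j" unfolding cs by (simp add: sorted_wrt_append)
  have "c \<in> set as" if "c \<in> cols n R" "j < c" for c
  proof -
    have "c \<in> set (as @ j # bs)" using that finite_cols unfolding cs[symmetric] by simp
    with that smaller show ?thesis by auto
  qed
  moreover define w where "w = ?run (sorted_list_of_set (unrestricted_rows n R T)) as"
  ultimately have "\<forall>c\<in>cols n R. j < c \<longrightarrow> white_rows n R T c \<subseteq> set w"
    by (auto simp: set_foldl_xi_step)
  moreover have "xi n R T = ?run (xi_step n R T w j) bs"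
    unfolding xi_def cs w_def by simp
  then have "subseq (xi_step n R T w j) (xi n R T)" by (simp add: subseq_foldl_xi_step)
  ultimately show ?thesis by blast
qed

lemma white_dot_before_next:
  assumes "rightmost_restricted_zero n R T i j"
  shows "subseq [i, j] (xi n R T)"
proof -
  have "j \<in> cols n R" using assms by (blast dest: rightmost_restricted_zero_cell cell_labels)
  then obtain w where "subseq (xi_step n R T w j) (xi n R T)" using xi_at_column by blast
  moreover have "subseq [i, j] (xi_step n R T w j)"
    using assms by (intro white_row_before_column) (simp add: white_rows_def)
  ultimately show ?thesis by (rule subseq_order.order_trans[rotated])
qed

lemma black_dot_before_next:
  assumes "perm_tableau n R T" "topmost_one n R T i j" "rightmost_restricted_zero n R T i j'"
  shows "subseq [j, i] (xi n R T)"
proof -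
  have "j \<in> cols n R" using assms(2) by (auto simp: topmost_one_def dest: cell_labels)
  then obtain w where sub: "subseq (xi_step n R T w j) (xi n R T)"
    and earlier: "\<forall>c\<in>cols n R. j < c \<longrightarrow> white_rows n R T c \<subseteq> set w"
    using xi_at_column by blast
  have "j' \<in> cols n R" using assms(3) by (blast dest: rightmost_restricted_zero_cell cell_labels)
  moreover have "j < j'" by (rule white_dot_left_of_black_dot[OF assms])
  ultimately have "i \<in> set w" using earlier assms(3) by (auto simp: white_rows_def)
  then have "subseq [j, i] (xi_step n R T w j)"
    using column_before_black_row black_row_eq[OF assms(2)] by metis
  with sub show ?thesis by (rule subseq_order.order_trans[rotated])
qed

lemma next_dot_label_after:
  assumes "perm_tableau n R T" "is_dot n R T d" "next_dot n R T d = Some d'"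
  shows "subseq [dot_label d, dot_label d'] (xi n R T)"
proof (cases d)
  case (White i)
  then obtain j where r: "rightmost_restricted_zero n R T i j" using assms(2) by auto
  then have "d' = Black j" using assms(3) White next_of_white_dot by simp
  with White white_dot_before_next[OF r] show ?thesis by simp
next
  case (Black j)
  then obtain i where t: "topmost_one n R T i j" using assms(2) by auto
  with assms(3) Black obtain j' where "d' = White i" "rightmost_restricted_zero n R T i j'"
    using next_of_black_dot by blast
  with Black black_dot_before_next[OF assms(1) t] show ?thesis by simp
qed

lemma dot_label_in_xi:
  assumes "perm_tableau n R T" "is_dot n R T d"
  shows "dot_label d \<in> set (xi n R T)"
proof (cases d)
  case (White i)
  then obtain j where "rightmost_restricted_zero n R T i j" using assms(2) by auto
  then have "j \<in> cols n R" "i \<in> white_rows n R T j"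
    by (auto simp: white_rows_def dest: rightmost_restricted_zero_cell cell_labels)
  then show ?thesis using White set_xi[OF assms(1)] by auto
next
  case (Black j)
  then have "j \<in> cols n R" using assms(2) by (auto simp: topmost_one_def dest: cell_labels)
  then show ?thesis using Black set_xi[OF assms(1)] by auto
qed


theorem lemma2p4:
  fixes n :: nat and R :: "nat set" and T :: "nat \<Rightarrow> nat \<Rightarrow> bool" and ds :: "dot list"
  assumes "perm_tableau n R T"
    and "alt_path n R T ds"
  shows "subseq (map dot_label ds) (xi n R T)"
proof (rule subseq_if_successive_pairs[OF distinct_xi[OF assms(1)]])
  have steps: "successively (\<lambda>d d'. next_dot n R T d = Some d') ds"
    using alt_path_steps[OF assms(2)] .
  moreover have "is_dot n R T (hd ds)" using assms(2) by (simp add: alt_path_def)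
  ultimately have dots: "\<forall>d\<in>set ds. is_dot n R T d" by (rule dots_along_steps[OF assms(1)])
  show "set (map dot_label ds) \<subseteq> set (xi n R T)"
    using dots dot_label_in_xi[OF assms(1)] by auto
  have "successively (\<lambda>d d'. subseq [dot_label d, dot_label d'] (xi n R T)) ds"
    using steps by (rule successively_mono) (use dots next_dot_label_after[OF assms(1)] in blast)
  then show "successively (\<lambda>a b. subseq [a, b] (xi n R T)) (map dot_label ds)"
    by (simp add: successively_map)
qed

end
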